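(* Let $P$ be the Borel probability measure on $\mathbb{R}$ with density $f(x)=\frac32$ if $x\in J_1:=[0,\frac13]$, $f(x)=\frac94$ if $x\in J_2\cup J_3$ where $J_2:=[\frac23,\frac79]$ and $J_3:=[\frac89,1]$, and $f(x)=0$ otherwise. Let $\alpha=\{a_1,a_2,a_3,a_4\}$ be an optimal set of four-means for $P$ with $a_1<a_2<a_3<a_4$. Then $a_1=\frac1{12}$, $a_2=\frac14$, $a_3=\frac{13}{18}$, $a_4=\frac{17}{18}$, and the corresponding quantization error is $V_4=\frac{13}{7776}$.
   Context: For $n\in\mathbb{N}$, the $n$th quantization error of $P$ is $V_n=\inf\{\int\min_{a\in\alpha}(x-a)^2\,dP(x):\alpha\subset\mathbb{R},\ \mathrm{card}(\alpha)\le n\}$, and an optimal set of $n$-means is a set $\alpha$ with $\mathrm{card}(\alpha)\le n$ attaining this infimum. *)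

theory Defs
  imports "HOL-Analysis.Analysis"
begin

definition dens :: "real \<Rightarrow> real" where
  "dens x = (if x \<in> {0..1/3} then 3/2
             else if x \<in> {2/3..7/9} \<union> {8/9..1} then 9/4 else 0)"

definition P :: "real measure" where
  "P = density lborel (\<lambda>x. ennreal (dens x))"

definition distortion :: "real measure \<Rightarrow> real set \<Rightarrow> real" where
  "distortion M \<alpha> = (\<integral>x. Min ((\<lambda>a. (x - a)\<^sup>2) ` \<alpha>) \<partial>M)"

definition quant_error :: "real measure \<Rightarrow> nat \<Rightarrow> real" where
  "quant_error M n = Inf {distortion M \<alpha> | \<alpha>. finite \<alpha> \<and> \<alpha> \<noteq> {} \<and> card \<alpha> \<le> n}"

definition optimal_set :: "real measure \<Rightarrow> nat \<Rightarrow> real set \<Rightarrow> bool" where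
  "optimal_set M n \<alpha> \<longleftrightarrow> finite \<alpha> \<and> \<alpha> \<noteq> {} \<and> card \<alpha> \<le> n
      \<and> distortion M \<alpha> = quant_error M n"

end

theory Submission
  imports Defs
begin

text \<open>Take the reference function \<open>\<rho> = 1/144\<close> on \<open>J\<^sub>1\<close> and \<open>\<rho> x = 1/216 + (x - c)\<^sup>2\<close> on the
  intervals \<open>J\<^sub>2, J\<^sub>3\<close> with centres \<open>c = 13/18, 17/18\<close>. Pointwise
  \<open>min\<^sub>i y\<^sub>i \<ge> \<rho> - \<Sum>\<^sub>i (\<rho> - y\<^sub>i)\<^sup>+\<close>, so the distortion of \<open>{a\<^sub>1, \<dots>, a\<^sub>4}\<close> is at least
  \<open>\<integral>\<rho> dP - \<Sum>\<^sub>i g(a\<^sub>i) = 49/7776 - \<Sum>\<^sub>i g(a\<^sub>i)\<close>, where the gain \<open>g(b) = \<integral>(\<rho> - (x - b)\<^sup>2)\<^sup>+ dP\<close>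
  of a single point is computed explicitly: \<open>g \<le> 1/864\<close>, with equality only on
  \<open>[1/12, 1/4] \<union> {13/18, 17/18}\<close>. Since \<open>49/7776 - 4/864 = 13/7776\<close> is the distortion of the
  claimed optimal set, every point of an optimal set lies in that set. It must contain both centres
  (otherwise \<open>J\<^sub>2\<close> or \<open>J\<^sub>3\<close> alone costs \<open>1/144\<close>), and the two remaining points are then pinned down
  by an exact cubic identity for the error on \<open>J\<^sub>1\<close>.\<close>

lemma integral_eq_antiderivative:
  fixes F f :: "real \<Rightarrow> real"
  assumes "a \<le> b" "\<And>x. a \<le> x \<Longrightarrow> x \<le> b \<Longrightarrow> (F has_real_derivative f x) (at x)"
  shows "integral {a..b} f = F b - F a"
proof (rule integral_unique, rule fundamental_theorem_of_calculus[OF assms(1)])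
  fix x assume "x \<in> {a..b}"
  then show "(F has_vector_derivative f x) (at x within {a..b})"
    using assms(2) by (auto simp: has_real_derivative_iff_has_vector_derivative[symmetric]
        intro: has_field_derivative_at_within)
qed

lemma integral_pos_part_eq:
  fixes f :: "real \<Rightarrow> real"
  assumes "l \<le> r" and cont: "continuous_on {l..r} f"
    and pos: "\<And>x. u \<le> x \<Longrightarrow> x \<le> v \<Longrightarrow> 0 \<le> f x"
    and neg: "\<And>x. l \<le> x \<Longrightarrow> x \<le> r \<Longrightarrow> x \<le> u \<or> v \<le> x \<Longrightarrow> f x \<le> 0"
  shows "integral {l..r} (\<lambda>x. max (f x) 0) =
    (if max l u \<le> min r v then integral {max l u..min r v} f else 0)"
proof -
  define L R where "L = max l u" and "R = min r v"
  let ?g = "\<lambda>x. max (f x) 0"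
  have vanish: "integral {a..b} ?g = 0"
    if "l \<le> a" "b \<le> r" "\<And>x. a \<le> x \<Longrightarrow> x \<le> b \<Longrightarrow> x \<le> u \<or> v \<le> x" for a b
  proof -
    have "integral {a..b} ?g = integral {a..b} (\<lambda>_. 0::real)"
      by (rule integral_cong) (use that neg in \<open>auto simp: max_def\<close>)
    then show ?thesis by simp
  qed
  show ?thesis
  proof (cases "L \<le> R")
    case True
    have LR: "l \<le> L" "L \<le> R" "R \<le> r" using True \<open>l \<le> r\<close> by (auto simp: L_def R_def)
    have int: "?g integrable_on {l..r}" "?g integrable_on {L..r}"
      using cont LR by (auto intro!: integrable_continuous_interval continuous_intros
          intro: continuous_on_subset)
    have "integral {l..L} ?g = 0"
    proof (cases "u \<le> l")
      case True then show ?thesis by (simp add: L_def)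
    next
      case False then show ?thesis by (intro vanish) (use LR in \<open>auto simp: L_def\<close>)
    qed
    moreover have "integral {R..r} ?g = 0"
    proof (cases "r \<le> v")
      case True then show ?thesis by (simp add: R_def)
    next
      case False then show ?thesis by (intro vanish) (use LR in \<open>auto simp: R_def\<close>)
    qed
    moreover have "integral {L..R} ?g = integral {L..R} f"
      by (rule integral_cong) (use pos in \<open>auto simp: L_def R_def\<close>)
    moreover have "integral {l..r} ?g = integral {l..L} ?g + (integral {L..R} ?g + integral {R..r} ?g)"
      using Henstock_Kurzweil_Integration.integral_combine[OF LR(1) _ int(1)]
        Henstock_Kurzweil_Integration.integral_combine[OF LR(2,3) int(2)] LR by simp
    ultimately show ?thesis using True by (simp add: L_def R_def)
  next
    case False
    have "integral {l..r} ?g = 0" by (rule vanish) (use False in \<open>auto simp: L_def R_def\<close>)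
    then show ?thesis using False by (simp only: L_def R_def if_False)
  qed
qed

definition gain_J1 :: "real \<Rightarrow> real" where
  "gain_J1 b = integral {0..1/3} (\<lambda>x. max (1/144 - (x - b)^2) 0)"

lemma gain_J1_cases:
  "gain_J1 b =
    (if b \<le> -1/12 \<or> 5/12 \<le> b then 0
     else if b < 1/12 then 1/1296 - (1/12 - b)^2 * (b + 1/6) / 3
     else if b \<le> 1/4 then 1/1296
     else 1/1296 - (b - 1/4)^2 * (1/2 - b) / 3)"
proof -
  define L R where "L = max 0 (b - 1/12)" and "R = min (1/3) (b + 1/12)"
  define G where "G y = y/144 - (y - b)^3/3" for y
  have factor: "1/144 - (x - b)^2 = (x - (b - 1/12)) * ((b + 1/12) - x)" for x
    by (simp add: algebra_simps power2_eq_square)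
  have "gain_J1 b = (if L \<le> R then integral {L..R} (\<lambda>x. 1/144 - (x - b)^2) else 0)"
    unfolding gain_J1_def L_def R_def
  proof (rule integral_pos_part_eq)
    show "0 \<le> 1/144 - (x - b)^2" if "b - 1/12 \<le> x" "x \<le> b + 1/12" for x
      unfolding factor using that by (intro mult_nonneg_nonneg) auto
    show "1/144 - (x - b)^2 \<le> 0" if "x \<le> b - 1/12 \<or> b + 1/12 \<le> x" for x
      unfolding factor using that by (auto intro: mult_nonpos_nonneg mult_nonneg_nonpos)
  qed (auto intro!: continuous_intros)
  also have "\<dots> = (if L \<le> R then G R - G L else 0)"
    by (auto intro!: integral_eq_antiderivative derivative_eq_intros
        simp: G_def power2_eq_square)
  finally have gain: "gain_J1 b = (if L \<le> R then G R - G L else 0)" .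
  consider "b \<le> -1/12 \<or> 5/12 \<le> b" | "-1/12 < b" "b < 1/12" | "1/12 \<le> b" "b \<le> 1/4"
    | "1/4 < b" "b < 5/12" by linarith
  then show ?thesis
  proof cases
    case 1
    then have "\<not> L < R" by (auto simp: L_def R_def)
    then show ?thesis using gain 1 by auto
  next
    case 2
    then have LR: "L = 0" "R = b + 1/12" by (auto simp: L_def R_def)
    with gain 2 show ?thesis
      by (simp add: LR G_def field_simps power2_eq_square power3_eq_cube)
  next
    case 3
    then have LR: "L = b - 1/12" "R = b + 1/12" by (auto simp: L_def R_def)
    with gain 3 show ?thesis
      by (simp add: LR G_def field_simps power2_eq_square power3_eq_cube)
  next
    case 4
    then have LR: "L = b - 1/12" "R = 1/3" by (auto simp: L_def R_def)
    with gain 4 show ?thesis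
      by (simp add: LR G_def field_simps power2_eq_square power3_eq_cube)
  qed
qed

lemma gain_J1_le: "gain_J1 b \<le> 1/1296"
  and gain_J1_less: "b < 1/12 \<or> 1/4 < b \<Longrightarrow> gain_J1 b < 1/1296"
  and gain_J1_eq_0: "b \<le> -1/12 \<or> 5/12 \<le> b \<Longrightarrow> gain_J1 b = 0"
proof -
  have left: "0 < (1/12 - b)^2 * (b + 1/6) / 3" if "-1/12 < b" "b < 1/12"
    using that by (intro divide_pos_pos mult_pos_pos) auto
  have right: "0 < (b - 1/4)^2 * (1/2 - b) / 3" if "1/4 < b" "b < 5/12"
    using that by (intro divide_pos_pos mult_pos_pos) auto
  show "gain_J1 b \<le> 1/1296" "b < 1/12 \<or> 1/4 < b \<Longrightarrow> gain_J1 b < 1/1296"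
    "b \<le> -1/12 \<or> 5/12 \<le> b \<Longrightarrow> gain_J1 b = 0"
    using left right by (auto simp: gain_J1_cases)
qed

definition gain_centred :: "real \<Rightarrow> real \<Rightarrow> real" where
  "gain_centred c b = integral {c - 1/18..c + 1/18} (\<lambda>x. max (1/216 + (x - c)^2 - (x - b)^2) 0)"

lemma gain_centred_reflect: "gain_centred c b = gain_centred (-c) (-b)"
proof -
  have "gain_centred (-c) (-b) = integral {-(c + 1/18)..-(c - 1/18)}
      (\<lambda>x. max (1/216 + (-x - c)^2 - (-x - b)^2) 0)"
    unfolding gain_centred_def by (simp add: algebra_simps power2_eq_square)
  also have "\<dots> = gain_centred c b"
    unfolding gain_centred_def
    by (rule Henstock_Kurzweil_Integration.integral_reflect_real)
  finally show ?thesis by simp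
qed

lemma gain_centred_self: "gain_centred c c = 1/1944"
  by (simp add: gain_centred_def)

text \<open>For \<open>b = c + d\<close> the integrand is the positive part of the affine function \<open>2 d (x - z)\<close>,
  and \<open>w\<close> is the distance from its zero \<open>z\<close> to the right end of the interval. Its positivity
  region \<open>[z, \<infinity>)\<close> is truncated at an arbitrary point beyond the interval.\<close>
lemma gain_centred_right:
  assumes d: "0 < d"
  defines "w \<equiv> (d/9 + 1/216 - d^2) / (2 * d)"
  shows "gain_centred c (c + d) = (if 1/9 \<le> w then (1/216 - d^2) / 9 else if 0 \<le> w then d * w^2 else 0)"
proof -
  define z where "z = c + 1/18 - w"
  have affine: "1/216 + (x - c)^2 - (x - (c + d))^2 = 2 * d * (x - z)" for x
    using d by (simp add: z_def w_def field_simps power2_eq_square)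
  have "gain_centred c (c + d) = (if max (c - 1/18) z \<le> min (c + 1/18) (c + 1/18 + 1)
      then integral {max (c - 1/18) z..min (c + 1/18) (c + 1/18 + 1)} (\<lambda>x. 2 * d * (x - z)) else 0)"
    unfolding gain_centred_def affine
    by (rule integral_pos_part_eq) (use d in \<open>auto intro!: continuous_intros mult_nonneg_nonpos\<close>)
  also have "\<dots> = (if max (c - 1/18) z \<le> c + 1/18
      then d * (c + 1/18 - z)^2 - d * (max (c - 1/18) z - z)^2 else 0)"
    by (auto simp del: integral_mult_right intro!: integral_eq_antiderivative derivative_eq_intros)
  also have "\<dots> = (if 1/9 \<le> w then (1/216 - d^2) / 9 else if 0 \<le> w then d * w^2 else 0)"
  proof -
    have "2 * d * w = d/9 + 1/216 - d^2" using d by (simp add: w_def)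
    then have "d * w^2 - d * (w - 1/9)^2 = (1/216 - d^2) / 9"
      by (simp add: power2_eq_square algebra_simps)
    moreover have "max (c - 1/18) z = (if 1/9 \<le> w then c - 1/18 else z)" by (auto simp: z_def)
    ultimately show ?thesis by (auto simp: z_def)
  qed
  finally show ?thesis .
qed

lemma gain_centred_right_bounds:
  assumes d: "0 < d"
  shows "gain_centred c (c + d) < 1/1944"
    and "3/20 \<le> d \<Longrightarrow> gain_centred c (c + d) = 0"
    and "1/16 \<le> d \<Longrightarrow> gain_centred c (c + d) \<le> 265/1119744"
proof -
  define w where "w = (d/9 + 1/216 - d^2) / (2 * d)"
  have gain: "gain_centred c (c + d) = (if 1/9 \<le> w then (1/216 - d^2) / 9 else if 0 \<le> w then d * w^2 else 0)"
    using gain_centred_right[OF d] by (simp add: w_def)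
  have dw: "2 * (d * w) = d/9 + 1/216 - d^2" using d by (simp add: w_def)
  have dw_le: "d * w \<le> 5/1296"
    using dw zero_le_power2[of "d - 1/18"] by (simp add: power2_eq_square algebra_simps)
  have middle: "d * w^2 \<le> 5/1296 * w" if "0 \<le> w"
    using mult_right_mono[OF dw_le that] by (simp add: power2_eq_square algebra_simps)
  show "gain_centred c (c + d) < 1/1944"
    using gain middle d by (auto simp: power2_eq_square)
  show "gain_centred c (c + d) = 0" if "3/20 \<le> d"
  proof -
    have "(3/20) * (7/180) \<le> d * (d - 1/9)" using that by (intro mult_mono) auto
    then have "d * w < 0" using dw by (simp add: power2_eq_square algebra_simps)
    then have "w < 0" using d by (simp add: mult_less_0_iff)
    then show ?thesis using gain by simp
  qed
  show "gain_centred c (c + d) \<le> 265/1119744" if "1/16 \<le> d"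
  proof -
    have "1/16 * (1/16) \<le> d^2" using mult_mono[OF that that] d by (simp add: power2_eq_square)
    then have "d * w < d * (1/9)" "d * w \<le> d * (53/864)"
      using dw that by linarith+
    then have "w < 1/9" "w \<le> 53/864" using d by simp_all
    then show ?thesis using gain middle by auto
  qed
qed

lemma gain_centred_le: "gain_centred c b \<le> 1/1944"
  and gain_centred_less: "b \<noteq> c \<Longrightarrow> gain_centred c b < 1/1944"
  and gain_centred_eq_0: "3/20 \<le> \<bar>b - c\<bar> \<Longrightarrow> gain_centred c b = 0"
  and gain_centred_far_le: "1/16 \<le> \<bar>b - c\<bar> \<Longrightarrow> gain_centred c b \<le> 265/1119744"
proof -
  have shift: "\<exists>c'. gain_centred c b = gain_centred c' (c' + \<bar>b - c\<bar>)" if "b \<noteq> c"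
  proof (cases "c < b")
    case True then show ?thesis by (intro exI[of _ c]) simp
  next
    case False then show ?thesis
      using that gain_centred_reflect[of c b] by (intro exI[of _ "-c"]) simp
  qed
  then have "b \<noteq> c \<longrightarrow> gain_centred c b < 1/1944 \<and>
      (3/20 \<le> \<bar>b - c\<bar> \<longrightarrow> gain_centred c b = 0) \<and>
      (1/16 \<le> \<bar>b - c\<bar> \<longrightarrow> gain_centred c b \<le> 265/1119744)"
    using gain_centred_right_bounds[of "\<bar>b - c\<bar>"] by force
  then show "gain_centred c b \<le> 1/1944" "b \<noteq> c \<Longrightarrow> gain_centred c b < 1/1944"
    "3/20 \<le> \<bar>b - c\<bar> \<Longrightarrow> gain_centred c b = 0"
    "1/16 \<le> \<bar>b - c\<bar> \<Longrightarrow> gain_centred c b \<le> 265/1119744"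
    by (auto simp: gain_centred_self)
qed

text \<open>The reference levels \<open>1/144\<close> and \<open>1/216\<close> are tuned so that the maximal gains
  \<open>3/2 \<cdot> 1/1296\<close> on \<open>J\<^sub>1\<close> and \<open>9/4 \<cdot> 1/1944\<close> on \<open>J\<^sub>2\<close>, \<open>J\<^sub>3\<close> coincide.\<close>
definition gain :: "real \<Rightarrow> real" where
  "gain b = 3/2 * gain_J1 b + 9/4 * gain_centred (13/18) b + 9/4 * gain_centred (17/18) b"

definition max_gain_points :: "real set" where
  "max_gain_points = {1/12..1/4} \<union> {13/18, 17/18}"

lemma gain_le: "gain b \<le> 1/864"
  and gain_less: "b \<notin> max_gain_points \<Longrightarrow> gain b < 1/864"
proof -
  note J1 = gain_J1_le[of b] gain_J1_less[of b] gain_J1_eq_0[of b]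
  note J2 = gain_centred_le[where c = "13/18" and b = b]
    gain_centred_less[where c = "13/18" and b = b]
    gain_centred_eq_0[where c = "13/18" and b = b]
    gain_centred_far_le[where c = "13/18" and b = b]
  note J3 = gain_centred_le[where c = "17/18" and b = b]
    gain_centred_less[where c = "17/18" and b = b]
    gain_centred_eq_0[where c = "17/18" and b = b]
    gain_centred_far_le[where c = "17/18" and b = b]
  consider "b < 5/12" | "5/12 \<le> b" "b \<le> 79/100" | "79/100 < b" "b < 22/25" | "22/25 \<le> b"
    by linarith
  then have "gain b \<le> 1/864 \<and> (b \<notin> max_gain_points \<longrightarrow> gain b < 1/864)"
    by cases (use J1 J2 J3 in \<open>auto simp: gain_def max_gain_points_def\<close>)+
  then show "gain b \<le> 1/864" "b \<notin> max_gain_points \<Longrightarrow> gain b < 1/864" by auto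
qed

lemma integral_P_continuous:
  fixes g :: "real \<Rightarrow> real"
  assumes g: "continuous_on UNIV g"
  shows "integral\<^sup>L P g =
    3/2 * integral {0..1/3} g + 9/4 * integral {2/3..7/9} g + 9/4 * integral {8/9..1} g"
proof -
  have on_interval: "set_integrable lborel {a..b} g" for a b :: real
    by (rule borel_integrable_atLeastAtMost') (rule continuous_on_subset[OF g], simp)
  have "dens x * g x = 3/2 * (indicator {0..1/3} x * g x) + 9/4 * (indicator {2/3..7/9} x * g x)
      + 9/4 * (indicator {8/9..1::real} x * g x)" for x
    by (auto simp: dens_def indicator_def)
  moreover have "dens \<in> borel_measurable borel" unfolding dens_def by measurable
  then have "integral\<^sup>L P g = (\<integral>x. dens x * g x \<partial>lborel)"
    unfolding P_def using g
    by (subst integral_density) (auto simp: dens_def borel_measurable_continuous_onI)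
  ultimately show ?thesis
    using on_interval[of 0 "1/3"] on_interval[of "2/3" "7/9"] on_interval[of "8/9" 1]
    by (simp add: set_integrable_def set_lebesgue_integral_def
        set_borel_integral_eq_integral(2)[symmetric])
qed

definition min_sq_dist4 :: "real \<Rightarrow> real \<Rightarrow> real \<Rightarrow> real \<Rightarrow> real \<Rightarrow> real" where
  "min_sq_dist4 a1 a2 a3 a4 x = min ((x - a1)^2) (min ((x - a2)^2) (min ((x - a3)^2) ((x - a4)^2)))"

lemma continuous_on_min_sq_dist4: "continuous_on S (min_sq_dist4 a1 a2 a3 a4)"
  unfolding min_sq_dist4_def by (intro continuous_intros)

lemma distortion_P_four_points:
  "distortion P {a1, a2, a3, a4} = 3/2 * integral {0..1/3} (min_sq_dist4 a1 a2 a3 a4)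
    + 9/4 * integral {2/3..7/9} (min_sq_dist4 a1 a2 a3 a4)
    + 9/4 * integral {8/9..1} (min_sq_dist4 a1 a2 a3 a4)"
proof -
  have "distortion P {a1, a2, a3, a4} = integral\<^sup>L P (min_sq_dist4 a1 a2 a3 a4)"
    unfolding distortion_def min_sq_dist4_def by (simp add: min.assoc)
  then show ?thesis using integral_P_continuous[OF continuous_on_min_sq_dist4] by simp
qed

lemma integral_power2_diff:
  "l \<le> r \<Longrightarrow> integral {l..r} (\<lambda>x. (x - a)^2) = ((r - a)^3 - (l - a)^3) / (3::real)"
  by (subst integral_eq_antiderivative[where F = "\<lambda>x. (x - a)^3 / 3"])
    (auto intro!: derivative_eq_intros simp: power2_eq_square field_simps)

lemma integral_min_sq_dist4_le:
  assumes "l \<le> r" "a \<in> {a1, a2, a3, a4}"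
  shows "integral {l..r} (min_sq_dist4 a1 a2 a3 a4) \<le> ((r - a)^3 - (l - a)^3) / 3"
proof -
  have "integral {l..r} (min_sq_dist4 a1 a2 a3 a4) \<le> integral {l..r} (\<lambda>x. (x - a)^2)"
    using assms(2) by (intro integral_le integrable_continuous_interval continuous_on_min_sq_dist4)
      (auto intro!: continuous_intros simp: min_sq_dist4_def)
  then show ?thesis using integral_power2_diff[OF assms(1)] by simp
qed

lemma integral_min_sq_dist4_ge:
  assumes "continuous_on {l..r} g"
    and "\<And>x b. x \<in> {l..r} \<Longrightarrow> b \<in> {a1, a2, a3, a4} \<Longrightarrow> g x \<le> (x - b)^2"
  shows "integral {l..r} g \<le> integral {l..r} (min_sq_dist4 a1 a2 a3 a4)"
  using assms by (intro integral_le integrable_continuous_interval continuous_on_min_sq_dist4)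
    (auto simp: min_sq_dist4_def)

lemma integral_min_sq_dist4_gain:
  fixes \<rho> :: "real \<Rightarrow> real"
  assumes \<rho>: "continuous_on {l..r} \<rho>"
  defines "G \<equiv> \<lambda>a. integral {l..r} (\<lambda>x. max (\<rho> x - (x - a)^2) 0)"
  shows "integral {l..r} \<rho> - (G a1 + G a2 + G a3 + G a4) \<le> integral {l..r} (min_sq_dist4 a1 a2 a3 a4)"
proof -
  let ?p = "\<lambda>a x. max (\<rho> x - (x - a)^2) 0"
  have int: "?p a integrable_on {l..r}" for a
    using \<rho> by (intro integrable_continuous_interval continuous_intros)
  have "integral {l..r} \<rho> \<le> integral {l..r}
      (\<lambda>x. min_sq_dist4 a1 a2 a3 a4 x + (?p a1 x + ?p a2 x + ?p a3 x + ?p a4 x))"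
    using \<rho> by (intro integral_le integrable_continuous_interval)
      (auto intro!: continuous_intros continuous_on_min_sq_dist4 simp: min_sq_dist4_def)
  also have "\<dots> = integral {l..r} (min_sq_dist4 a1 a2 a3 a4) + (G a1 + G a2 + G a3 + G a4)"
    using int by (simp add: G_def integral_add integrable_add integrable_continuous_interval
        continuous_on_min_sq_dist4)
  finally show ?thesis by simp
qed

lemma distortion_P_lower_bound:
  "49/7776 - (gain a1 + gain a2 + gain a3 + gain a4) \<le> distortion P {a1, a2, a3, a4}"
proof -
  have J1: "1/432 - (gain_J1 a1 + gain_J1 a2 + gain_J1 a3 + gain_J1 a4)
      \<le> integral {0..1/3} (min_sq_dist4 a1 a2 a3 a4)"
    using integral_min_sq_dist4_gain[of 0 "1/3" "\<lambda>_. 1/144"] by (simp add: gain_J1_def)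
  have centred: "11/17496 - (gain_centred c a1 + gain_centred c a2 + gain_centred c a3 + gain_centred c a4)
      \<le> integral {c - 1/18..c + 1/18} (min_sq_dist4 a1 a2 a3 a4)" for c
  proof -
    have "integral {c - 1/18..c + 1/18} (\<lambda>x. 1/216 + (x - c)^2) = 11/17496"
      by (subst integral_eq_antiderivative[where F = "\<lambda>x. x/216 + (x - c)^3/3"])
        (auto intro!: derivative_eq_intros simp: power2_eq_square power3_eq_cube field_simps)
    then show ?thesis
      using integral_min_sq_dist4_gain[of "c - 1/18" "c + 1/18" "\<lambda>x. 1/216 + (x - c)^2" a1 a2 a3 a4]
      by (simp add: gain_centred_def continuous_intros)
  qed
  show ?thesis
    using J1 centred[of "13/18"] centred[of "17/18"] by (simp add: distortion_P_four_points gain_def)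
qed

lemma distortion_P_candidate_le: "distortion P {1/12, 1/4, 13/18, 17/18} \<le> 13/7776"
proof -
  let ?m = "min_sq_dist4 (1/12) (1/4) (13/18) (17/18)"
  have "integral {0..1/3} ?m = integral {0..1/6} ?m + integral {1/6..1/3} ?m"
    by (rule Henstock_Kurzweil_Integration.integral_combine[symmetric])
      (auto intro: integrable_continuous_interval continuous_on_min_sq_dist4)
  moreover have "integral {0..1/6} ?m \<le> 1/2592"
    using integral_min_sq_dist4_le[of 0 "1/6" "1/12"] by (simp add: power3_eq_cube)
  moreover have "integral {1/6..1/3} ?m \<le> 1/2592"
    using integral_min_sq_dist4_le[of "1/6" "1/3" "1/4"] by (simp add: power3_eq_cube)
  moreover have "integral {2/3..7/9} ?m \<le> 1/8748"
    using integral_min_sq_dist4_le[of "2/3" "7/9" "13/18"] by (simp add: power3_eq_cube)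
  moreover have "integral {8/9..1} ?m \<le> 1/8748"
    using integral_min_sq_dist4_le[of "8/9" 1 "17/18"] by (simp add: power3_eq_cube)
  ultimately show ?thesis unfolding distortion_P_four_points by linarith
qed

lemma centres_mem_of_distortion_P_le:
  assumes A: "{a1, a2, a3, a4} \<subseteq> max_gain_points"
    and D: "distortion P {a1, a2, a3, a4} \<le> 13/7776"
  shows "13/18 \<in> {a1, a2, a3, a4}" and "17/18 \<in> {a1, a2, a3, a4}"
proof -
  let ?m = "min_sq_dist4 a1 a2 a3 a4"
  have nonneg: "0 \<le> integral {l..r} ?m" for l r
    using integral_min_sq_dist4_ge[of l r "\<lambda>_. 0"] by simp
  have far: "1/324 \<le> integral {l..l + 1/9} ?m"
    if sep: "\<And>x b. x \<in> {l..l + 1/9} \<Longrightarrow> b \<in> {a1, a2, a3, a4} \<Longrightarrow> 1/6 \<le> \<bar>x - b\<bar>" for l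
  proof -
    have "1/36 \<le> (x - b)^2" if "x \<in> {l..l + 1/9}" "b \<in> {a1, a2, a3, a4}" for x b
      using abs_le_square_iff[of "1/6" "x - b"] sep[OF that] by (simp add: power2_eq_square)
    then show ?thesis using integral_min_sq_dist4_ge[of l "l + 1/9" "\<lambda>_. 1/36"] by simp
  qed
  show "13/18 \<in> {a1, a2, a3, a4}"
  proof (rule ccontr)
    assume "13/18 \<notin> {a1, a2, a3, a4}"
    then have "1/324 \<le> integral {2/3..7/9} ?m"
      using far[of "2/3"] A by (force simp: max_gain_points_def)
    then show False using D nonneg[of 0 "1/3"] nonneg[of "8/9" 1]
      unfolding distortion_P_four_points by linarith
  qed
  show "17/18 \<in> {a1, a2, a3, a4}"
  proof (rule ccontr)
    assume "17/18 \<notin> {a1, a2, a3, a4}"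
    then have "1/324 \<le> integral {8/9..1} ?m"
      using far[of "8/9"] A by (force simp: max_gain_points_def)
    then show False using D nonneg[of 0 "1/3"] nonneg[of "2/3" "7/9"]
      unfolding distortion_P_four_points by linarith
  qed
qed

lemma integral_min_sq_dist4_nearest:
  assumes "l \<le> r" "a \<in> {a1, a2, a3, a4}"
    and "\<And>x b. x \<in> {l..r} \<Longrightarrow> b \<in> {a1, a2, a3, a4} \<Longrightarrow> \<bar>x - a\<bar> \<le> \<bar>x - b\<bar>"
  shows "(r - a)^3 - (l - a)^3 \<le> 3 * integral {l..r} (min_sq_dist4 a1 a2 a3 a4)"
proof -
  have "integral {l..r} (\<lambda>x. (x - a)^2) \<le> integral {l..r} (min_sq_dist4 a1 a2 a3 a4)"
    by (rule integral_min_sq_dist4_ge)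
      (use assms(3) in \<open>auto intro!: continuous_intros simp: abs_le_square_iff\<close>)
  then show ?thesis using integral_power2_diff[OF assms(1), of a] by simp
qed

text \<open>The right-hand side is three times the error of \<open>a\<^sub>1, a\<^sub>2\<close> on \<open>J\<^sub>1\<close> with the cell boundary at
  their midpoint, written as its minimum value plus cubic terms.\<close>
lemma integral_J1_two_nearest:
  assumes "0 \<le> a1" "a1 < a2" "a2 \<le> 1/3" "a2 < a3" "2/3 \<le> a2 + a3" "a3 < a4"
  shows "1/432 + (a1 - 1/12)^2 * (a1 + 1/6) + (1/4 - a2)^2 * (1/2 - a2)
      + (a2 - a1 - 1/6)^2 * (a2 - a1 + 1/3) / 4
    \<le> 3 * integral {0..1/3} (min_sq_dist4 a1 a2 a3 a4)"
proof -
  let ?m = "min_sq_dist4 a1 a2 a3 a4"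
  define t where "t = (a1 + a2) / 2"
  have t: "0 \<le> t" "t \<le> 1/3" using assms by (auto simp: t_def)
  have "1/432 + (a1 - 1/12)^2 * (a1 + 1/6) + (1/4 - a2)^2 * (1/2 - a2)
      + (a2 - a1 - 1/6)^2 * (a2 - a1 + 1/3) / 4
      = (t - a1)^3 - (0 - a1)^3 + ((1/3 - a2)^3 - (t - a2)^3)"
    by (simp add: t_def field_simps power2_eq_square power3_eq_cube)
  also have "\<dots> \<le> 3 * integral {0..t} ?m + 3 * integral {t..1/3} ?m"
    by (intro add_mono integral_min_sq_dist4_nearest) (use t assms in \<open>auto simp: t_def\<close>)
  also have "\<dots> = 3 * integral {0..1/3} ?m"
    using Henstock_Kurzweil_Integration.integral_combine[of 0 t "1/3" ?m] t
    by (simp add: integrable_continuous_interval continuous_on_min_sq_dist4)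
  finally show ?thesis .
qed

lemma four_points_determined:
  assumes order: "a1 < a2" "a2 < a3" "a3 < a4"
    and A: "{a1, a2, a3, a4} \<subseteq> max_gain_points"
    and D: "distortion P {a1, a2, a3, a4} \<le> 13/7776"
  shows "a1 = 1/12 \<and> a2 = 1/4 \<and> a3 = 13/18 \<and> a4 = 17/18"
proof -
  let ?m = "min_sq_dist4 a1 a2 a3 a4"
  have S: "a1 \<in> max_gain_points" "a2 \<in> max_gain_points" "a3 \<in> max_gain_points"
    "a4 \<in> max_gain_points" using A by auto
  note centres = centres_mem_of_distortion_P_le[OF A D]
  have "a4 = 17/18"
    using centres(2) order S(4) by (auto simp: max_gain_points_def)
  moreover from this have "a3 = 13/18"
    using centres(1) order S(3) by (auto simp: max_gain_points_def)
  ultimately have a34: "a3 = 13/18" "a4 = 17/18" by simp_all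
  have a12: "1/12 \<le> a1" "a1 \<le> 1/4" "1/12 \<le> a2" "a2 \<le> 1/4"
    using order S(1,2) a34 by (auto simp: max_gain_points_def)
  define e1 e2 e3 where "e1 = (a1 - 1/12)^2 * (a1 + 1/6)"
    and "e2 = (1/4 - a2)^2 * (1/2 - a2)" and "e3 = (a2 - a1 - 1/6)^2 * (a2 - a1 + 1/3) / 4"
  have "(7/9 - a3)^3 - (2/3 - a3)^3 \<le> 3 * integral {2/3..7/9} ?m"
    by (rule integral_min_sq_dist4_nearest) (use a12 a34 in \<open>auto simp: abs_if\<close>)
  then have "1/8748 \<le> integral {2/3..7/9} ?m" by (simp add: a34 power3_eq_cube)
  moreover have "(1 - a4)^3 - (8/9 - a4)^3 \<le> 3 * integral {8/9..1} ?m"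
    by (rule integral_min_sq_dist4_nearest) (use a12 a34 in \<open>auto simp: abs_if\<close>)
  then have "1/8748 \<le> integral {8/9..1} ?m" by (simp add: a34 power3_eq_cube)
  moreover have "1/432 + e1 + e2 + e3 \<le> 3 * integral {0..1/3} ?m"
    unfolding e1_def e2_def e3_def
    by (rule integral_J1_two_nearest) (use order a12 a34 in auto)
  moreover have "0 \<le> e1" "0 \<le> e2" "0 \<le> e3"
    using order a12 by (auto simp: e1_def e2_def e3_def)
  ultimately have "e1 + e2 + e3 \<le> 0"
    using D[unfolded distortion_P_four_points] by linarith
  then have "e1 = 0" "e2 = 0" using \<open>0 \<le> e1\<close> \<open>0 \<le> e2\<close> \<open>0 \<le> e3\<close> by linarith+
  then show ?thesis using a12 a34 by (auto simp: e1_def e2_def)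
qed

lemma distortion_nonneg:
  assumes "finite \<alpha>" "\<alpha> \<noteq> {}"
  shows "0 \<le> distortion M \<alpha>"
  unfolding distortion_def
proof (rule integral_nonneg_AE, rule AE_I2)
  fix x
  have "Min ((\<lambda>a. (x - a)^2) ` \<alpha>) \<in> (\<lambda>a. (x - a)^2) ` \<alpha>"
    using assms by (intro Min_in) auto
  then show "0 \<le> Min ((\<lambda>a. (x - a)^2) ` \<alpha>)" by auto
qed

lemma quant_error_le_distortion:
  assumes "finite \<alpha>" "\<alpha> \<noteq> {}" "card \<alpha> \<le> n"
  shows "quant_error M n \<le> distortion M \<alpha>"
  unfolding quant_error_def
proof (rule cInf_lower)
  show "distortion M \<alpha> \<in> {distortion M \<beta> | \<beta>. finite \<beta> \<and> \<beta> \<noteq> {} \<and> card \<beta> \<le> n}"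
    using assms by blast
  show "bdd_below {distortion M \<beta> | \<beta>. finite \<beta> \<and> \<beta> \<noteq> {} \<and> card \<beta> \<le> n}"
    by (rule bdd_belowI[of _ 0]) (auto intro: distortion_nonneg)
qed

theorem lemma5p6:
  fixes a1 a2 a3 a4 :: real
  assumes "optimal_set P 4 {a1, a2, a3, a4}"
    and "a1 < a2" and "a2 < a3" and "a3 < a4"
  shows "a1 = 1/12 \<and> a2 = 1/4 \<and> a3 = 13/18 \<and> a4 = 17/18 \<and> quant_error P 4 = 13/7776"
proof -
  have opt: "distortion P {a1, a2, a3, a4} = quant_error P 4"
    using assms(1) by (simp add: optimal_set_def)
  also have "\<dots> \<le> distortion P {1/12, 1/4, 13/18, 17/18}"
    by (rule quant_error_le_distortion) auto
  also have "\<dots> \<le> 13/7776" by (rule distortion_P_candidate_le)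
  finally have upper: "distortion P {a1, a2, a3, a4} \<le> 13/7776" .
  have lower: "49/7776 - (gain a1 + gain a2 + gain a3 + gain a4) \<le> distortion P {a1, a2, a3, a4}"
    by (rule distortion_P_lower_bound)
  have max: "gain a1 = 1/864" "gain a2 = 1/864" "gain a3 = 1/864" "gain a4 = 1/864"
    using upper lower gain_le[of a1] gain_le[of a2] gain_le[of a3] gain_le[of a4] by linarith+
  then have "{a1, a2, a3, a4} \<subseteq> max_gain_points"
    using gain_less by fastforce
  then have "a1 = 1/12 \<and> a2 = 1/4 \<and> a3 = 13/18 \<and> a4 = 17/18"
    using four_points_determined assms(2-4) upper by blast
  moreover have "quant_error P 4 = 13/7776"
    using upper lower opt max by simp
  ultimately show ?thesis by simp
qed

end
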